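(* Let $n\geq 2$, $m\geq 1$, $r\geq 2$ be integers and let $\alpha$ be an integer with $1\leq\alpha<(m+1)^n$. Then $\Gamma_n^{\alpha,r}$ is homotopy equivalent to the induced subcomplex of $\Gamma_n^{\alpha,r}$ on the vertex set $\{x\in V(\Gamma_n^{\alpha,r}) : |x_i|\leq\lfloor r/2\rfloor \text{ for all } 1\leq i\leq n\}$.
   Context: $\mathbb{Z}^n$ carries the Manhattan metric $d(x,y)=\sum_i|x_i-y_i|$; for $X\subseteq\mathbb{Z}^n$, $\mathrm{VR}(X;r)$ is the simplicial complex on $X$ whose simplices are finite subsets of diameter at most $r$. Let $\prec$ be the anti-lexicographic order on $\mathbb{Z}^n$: $x\prec y$ iff at the largest index $i$ with $x_i\neq y_i$ one has $x_i<y_i$. Let $V_m=\{0,\ldots,m\}^n$. Let $H$ be $V_m$ with its first $\alpha$ elements (with respect to $\prec$) removed, $\delta$ the $\prec$-least element of $H$, and $Y=\{x-\delta: x\in H\}$ (so $\mathbf{0}=(0,\ldots,0)$ is the least element of $Y$). Then $\Gamma_n^{\alpha,r}$ is the link of $\mathbf{0}$ in $\mathrm{VR}(Y;r)$, i.e. the complex of simplices $\tau$ of $\mathrm{VR}(Y;r)$ with $\mathbf{0}\notin\tau$ and $\tau\cup\{\mathbf{0}\}\in\mathrm{VR}(Y;r)$. For a simplicial complex $K$ and a set $W$ of vertices, the induced subcomplex on $W$ consists of the simplices of $K$ contained in $W$. *)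

theory Defs
  imports "HOL-Analysis.Analysis"
begin

text \<open>Points of Z^n are integer lists of length n; coordinate i (1-based in the paper)
  is the list entry at index i-1.\<close>

definition manh :: "int list \<Rightarrow> int list \<Rightarrow> int" where
  "manh x y = (\<Sum>i<length x. \<bar>x ! i - y ! i\<bar>)"

definition antilex_less :: "int list \<Rightarrow> int list \<Rightarrow> bool" where
  "antilex_less x y \<longleftrightarrow> length x = length y \<and>
     (\<exists>i<length x. x ! i < y ! i \<and> (\<forall>j. i < j \<and> j < length x \<longrightarrow> x ! j = y ! j))"

definition cube :: "nat \<Rightarrow> nat \<Rightarrow> int list set" where
  "cube n m = {x. length x = n \<and> (\<forall>i<n. 0 \<le> x ! i \<and> x ! i \<le> int m)}"

text \<open>Position (0-based) of x in the anti-lex ordering of the cube.\<close>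
definition cube_rank :: "nat \<Rightarrow> nat \<Rightarrow> int list \<Rightarrow> nat" where
  "cube_rank n m x = card {y \<in> cube n m. antilex_less y x}"

definition Hset :: "nat \<Rightarrow> nat \<Rightarrow> nat \<Rightarrow> int list set" where
  "Hset n m \<alpha> = {x \<in> cube n m. \<alpha> \<le> cube_rank n m x}"

definition delta :: "nat \<Rightarrow> nat \<Rightarrow> nat \<Rightarrow> int list" where
  "delta n m \<alpha> = (THE d. d \<in> Hset n m \<alpha> \<and> (\<forall>x \<in> Hset n m \<alpha>. x \<noteq> d \<longrightarrow> antilex_less d x))"

definition Yset :: "nat \<Rightarrow> nat \<Rightarrow> nat \<Rightarrow> int list set" where
  "Yset n m \<alpha> = (\<lambda>x. map2 (-) x (delta n m \<alpha>)) ` Hset n m \<alpha>"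

definition VR :: "int list set \<Rightarrow> int \<Rightarrow> int list set set" where
  "VR X r = {\<tau>. \<tau> \<noteq> {} \<and> finite \<tau> \<and> \<tau> \<subseteq> X \<and> (\<forall>x\<in>\<tau>. \<forall>y\<in>\<tau>. manh x y \<le> r)}"

definition link :: "'a set set \<Rightarrow> 'a \<Rightarrow> 'a set set" where
  "link K v = {\<tau> \<in> K. v \<notin> \<tau> \<and> insert v \<tau> \<in> K}"

definition Gamma :: "nat \<Rightarrow> nat \<Rightarrow> nat \<Rightarrow> int \<Rightarrow> int list set set" where
  "Gamma n m \<alpha> r = link (VR (Yset n m \<alpha>) r) (replicate n 0)"

definition vertices :: "'a set set \<Rightarrow> 'a set" where
  "vertices K = \<Union> K"

definition induced :: "'a set set \<Rightarrow> 'a set \<Rightarrow> 'a set set" where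
  "induced K W = {\<tau> \<in> K. \<tau> \<subseteq> W}"

text \<open>Geometric realization of a (finite) simplicial complex K: barycentric-coordinate functions
  supported on a simplex of K, with the topology induced from the product topology
  (which for finite complexes is the usual topology of the realization).\<close>
definition realization :: "'a set set \<Rightarrow> ('a \<Rightarrow> real) topology" where
  "realization K = subtopology (powertop_real UNIV)
     {f. (\<forall>v. 0 \<le> f v) \<and> {v. f v \<noteq> 0} \<in> K \<and> sum f {v. f v \<noteq> 0} = 1}"

end

theory Submission
  imports Defs
begin

text \<open>A vertex y of a simplicial complex K is dominated by a vertex w \<noteq> y if adding w to any
  simplex containing y gives a simplex of K. Then sliding the barycentric weight of y linearly
  onto w is a deformation retraction of the realization of K onto that of K with y deleted.
  In \<Gamma>, a vertex y with \<bar>y_i\<bar> > \<lfloor>r/2\<rfloor> is dominated by the point obtained from y by moving y_i one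
  step towards 0: that point still lies in Y because H is an up-set of the cube for the
  anti-lexicographic order, and it remains within distance r of every point that is within
  distance r of both y and the origin. Deleting such vertices in order of decreasing distance
  from the origin leaves exactly the induced subcomplex.\<close>

definition simplicial_complex :: "'a set set \<Rightarrow> bool" where
  "simplicial_complex K \<longleftrightarrow>
     (\<forall>\<sigma>\<in>K. finite \<sigma>) \<and> (\<forall>\<sigma>\<in>K. \<forall>\<tau>. \<tau> \<subseteq> \<sigma> \<longrightarrow> \<tau> \<noteq> {} \<longrightarrow> \<tau> \<in> K)"

definition dominates :: "'a set set \<Rightarrow> 'a \<Rightarrow> 'a \<Rightarrow> bool" where
  "dominates K w y \<longleftrightarrow> w \<noteq> y \<and> (\<forall>\<sigma>\<in>K. y \<in> \<sigma> \<longrightarrow> insert w \<sigma> \<in> K)"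

lemma simplicial_complex_induced:
  "simplicial_complex K \<Longrightarrow> simplicial_complex (induced K S)"
  by (auto simp: simplicial_complex_def induced_def)

lemma induced_vertices: "induced K (vertices K) = K"
  by (auto simp: induced_def vertices_def)

lemma topspace_realization:
  "topspace (realization K) = {f. (\<forall>v. 0 \<le> f v) \<and> {v. f v \<noteq> 0} \<in> K \<and> sum f {v. f v \<noteq> 0} = 1}"
  by (simp add: realization_def)

lemma continuous_map_realization_coordinate:
  "continuous_map (realization K) euclideanreal (\<lambda>f. f v)"
  unfolding realization_def
  by (rule continuous_map_from_subtopology) (rule continuous_map_product_projection, simp)

lemma continuous_map_into_realization:
  assumes "\<And>v. continuous_map X euclideanreal (\<lambda>x. g x v)"
    and "\<And>x. x \<in> topspace X \<Longrightarrow> g x \<in> topspace (realization K)"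
  shows "continuous_map X (realization K) g"
  using assms unfolding realization_def
  by (auto simp: continuous_map_in_subtopology continuous_map_componentwise_UNIV)

definition move_weight :: "'a \<Rightarrow> 'a \<Rightarrow> real \<Rightarrow> ('a \<Rightarrow> real) \<Rightarrow> 'a \<Rightarrow> real" where
  "move_weight y w t f v =
     f v + (if v = w then (1 - t) * f y else 0) - (if v = y then (1 - t) * f y else 0)"

lemma move_weight_eq_self: "f y = 0 \<Longrightarrow> move_weight y w t f = f"
  by (auto simp: move_weight_def fun_eq_iff)

lemma move_weight_in_realization:
  assumes K: "simplicial_complex K" and dom: "dominates K w y"
    and f: "f \<in> topspace (realization K)" and t: "0 \<le> t" "t \<le> 1"
  shows "move_weight y w t f \<in> topspace (realization K)"
proof (cases "f y = 0")
  case True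
  then show ?thesis using f by (simp add: move_weight_eq_self)
next
  case False
  let ?g = "move_weight y w t f"
  have f0: "\<forall>v. 0 \<le> f v" and fK: "{v. f v \<noteq> 0} \<in> K" and f1: "sum f {v. f v \<noteq> 0} = 1"
    using f by (auto simp: topspace_realization)
  define U where "U = insert w {v. f v \<noteq> 0}"
  have wy: "w \<noteq> y" and UK: "U \<in> K"
    using dom fK False by (auto simp: dominates_def U_def)
  have finU: "finite U" and yU: "y \<in> U" and wU: "w \<in> U"
    using UK K False by (auto simp: simplicial_complex_def U_def)
  have "0 \<le> ?g v" for v
    using f0 t wy mult_left_le_one_le[of "f y" "1 - t"]
    by (cases "v = w"; cases "v = y") (auto simp: move_weight_def)
  moreover have gU: "{v. ?g v \<noteq> 0} \<subseteq> U"
    by (auto simp: move_weight_def U_def split: if_splits)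
  moreover have "sum ?g {v. ?g v \<noteq> 0} = 1"
  proof -
    have "sum ?g {v. ?g v \<noteq> 0} = sum ?g U"
      using finU gU by (intro sum.mono_neutral_left) auto
    also have "\<dots> = sum f U"
      using finU yU wU by (simp add: move_weight_def sum.distrib sum_subtractf)
    also have "\<dots> = sum f {v. f v \<noteq> 0}"
      using finU by (intro sum.mono_neutral_right) (auto simp: U_def)
    finally show ?thesis using f1 by simp
  qed
  moreover from this have "{v. ?g v \<noteq> 0} \<in> K"
    using K UK gU unfolding simplicial_complex_def by (metis sum.empty zero_neq_one)
  ultimately show ?thesis
    by (simp add: topspace_realization)
qed

lemma realization_delete_dominated_vertex:
  assumes K: "simplicial_complex K" and dom: "dominates K w y"
  shows "realization K homotopy_equivalent_space realization {\<sigma>\<in>K. y \<notin> \<sigma>}"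
proof (rule deformation_retract_imp_homotopy_equivalent_space)
  let ?K' = "{\<sigma>\<in>K. y \<notin> \<sigma>}"
  have wy: "w \<noteq> y" using dom by (simp add: dominates_def)
  have topspace_K': "topspace (realization ?K') = {f \<in> topspace (realization K). f y = 0}"
    by (auto simp: topspace_realization)
  let ?X = "prod_topology (top_of_set {0..1}) (realization K)"
  have "continuous_map ?X (realization K) (\<lambda>p. move_weight y w (fst p) (snd p))"
  proof (rule continuous_map_into_realization)
    show "continuous_map ?X euclideanreal (\<lambda>p. move_weight y w (fst p) (snd p) v)" for v
      unfolding move_weight_def
      by (intro continuous_intros
          continuous_map_compose[OF continuous_map_snd continuous_map_realization_coordinate, unfolded o_def]
          continuous_map_compose[OF continuous_map_fst, unfolded o_def]
          continuous_map_from_subtopology continuous_map_id[unfolded id_def])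
    show "move_weight y w (fst p) (snd p) \<in> topspace (realization K)" if "p \<in> topspace ?X" for p
      using that move_weight_in_realization[OF K dom] by auto
  qed
  then show "homotopic_with (\<lambda>x. True) (realization K) (realization K) (move_weight y w 0) id"
    unfolding homotopic_with_def by (intro exI[of _ "\<lambda>p. move_weight y w (fst p) (snd p)"])
      (auto simp: move_weight_def)
  have "continuous_map (realization K) (realization ?K') (move_weight y w 0)"
  proof (rule continuous_map_into_realization)
    show "continuous_map (realization K) euclideanreal (\<lambda>f. move_weight y w 0 f v)" for v
      unfolding move_weight_def by (intro continuous_intros continuous_map_realization_coordinate)
    show "move_weight y w 0 f \<in> topspace (realization ?K')" if "f \<in> topspace (realization K)" for f
      using that move_weight_in_realization[OF K dom] wy by (auto simp: topspace_K' move_weight_def)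
  qed
  moreover have "continuous_map (realization ?K') (realization K) id"
    by (rule continuous_map_into_realization) (auto simp: continuous_map_realization_coordinate topspace_realization)
  moreover have "move_weight y w 0 f = f" if "f \<in> topspace (realization ?K')" for f
    using that by (simp add: topspace_K' move_weight_eq_self)
  ultimately show "retraction_maps (realization K) (realization ?K') (move_weight y w 0) id"
    by (simp add: retraction_maps_def)
qed

lemma realization_induced_collapse:
  fixes \<phi> :: "'a \<Rightarrow> 'b::linorder"
  assumes K: "simplicial_complex K" and "finite S" and "G \<subseteq> S"
    and "\<forall>y\<in>S - G. \<exists>w\<in>S. \<phi> w < \<phi> y \<and> dominates K w y"
  shows "realization (induced K S) homotopy_equivalent_space realization (induced K G)"
  using assms(2-4)
proof (induction "card (S - G)" arbitrary: S)
  case 0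
  then have "S = G" by auto
  then show ?case by (simp add: homotopy_equivalent_space_refl)
next
  case (Suc k)
  then have fin: "finite (S - G)" and "S - G \<noteq> {}" by auto
  then have "Max (\<phi> ` (S - G)) \<in> \<phi> ` (S - G)"
    by (intro Max_in) auto
  then obtain y where y: "y \<in> S - G" and "\<phi> y = Max (\<phi> ` (S - G))"
    by auto
  then have y_max: "\<forall>z\<in>S - G. \<phi> z \<le> \<phi> y"
    using fin by simp
  obtain w where w: "w \<in> S" "\<phi> w < \<phi> y" "dominates K w y"
    using Suc.prems(3) y by blast
  have "dominates (induced K S) w y"
    using w by (auto simp: dominates_def induced_def)
  then have "realization (induced K S) homotopy_equivalent_space
      realization {\<sigma>\<in>induced K S. y \<notin> \<sigma>}"
    by (intro realization_delete_dominated_vertex simplicial_complex_induced K)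
  also have "{\<sigma>\<in>induced K S. y \<notin> \<sigma>} = induced K (S - {y})"
    by (auto simp: induced_def)
  also have "realization (induced K (S - {y})) homotopy_equivalent_space realization (induced K G)"
  proof (rule Suc.hyps(1))
    have "S - {y} - G = (S - G) - {y}" by blast
    then show "k = card (S - {y} - G)"
      using Suc.hyps(2) y fin by (simp add: card_Diff_singleton)
    show "\<forall>y'\<in>S - {y} - G. \<exists>w\<in>S - {y}. \<phi> w < \<phi> y' \<and> dominates K w y'"
    proof
      fix y' assume y': "y' \<in> S - {y} - G"
      then obtain w' where "w' \<in> S" "\<phi> w' < \<phi> y'" "dominates K w' y'"
        using Suc.prems(3) by blast
      moreover have "\<phi> y' \<le> \<phi> y" using y_max y' by blast
      ultimately show "\<exists>w\<in>S - {y}. \<phi> w < \<phi> y' \<and> dominates K w y'"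
        by (intro bexI[of _ w']) auto
    qed
  qed (use Suc.prems y in auto)
  finally show ?case .
qed

lemma manh_commute: "length x = length y \<Longrightarrow> manh x y = manh y x"
  unfolding manh_def by (simp add: abs_minus_commute)

lemma manh_self: "manh x x = 0"
  by (simp add: manh_def)

lemma manh_split_coordinate:
  assumes "length x = n" "i < n"
  shows "manh x y = \<bar>x ! i - y ! i\<bar> + (\<Sum>j\<in>{..<n} - {i}. \<bar>x ! j - y ! j\<bar>)"
  using assms unfolding manh_def by (simp add: sum.remove)

definition step_toward_origin :: "int list \<Rightarrow> nat \<Rightarrow> int list" where
  "step_toward_origin y i = y[i := y ! i - sgn (y ! i)]"

lemma manh_step_toward_origin_origin:
  assumes "length y = n" "i < n" "y ! i \<noteq> 0"
  shows "manh (step_toward_origin y i) (replicate n 0) = manh y (replicate n 0) - 1"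
proof -
  let ?w = "step_toward_origin y i"
  have "(\<Sum>j\<in>{..<n} - {i}. \<bar>?w ! j - replicate n 0 ! j\<bar>) =
        (\<Sum>j\<in>{..<n} - {i}. \<bar>y ! j - replicate n 0 ! j\<bar>)"
    by (intro sum.cong) (auto simp: step_toward_origin_def)
  moreover have "\<bar>y ! i - sgn (y ! i)\<bar> = \<bar>y ! i\<bar> - 1"
    using assms(3) by (auto simp: sgn_if)
  ultimately show ?thesis
    using manh_split_coordinate[OF assms(1,2)] manh_split_coordinate[of ?w n i] assms
    by (simp add: step_toward_origin_def)
qed

text \<open>If the step moves away from z in coordinate i, the loss of 1 is paid for by the
  triangle inequality through the origin in the other coordinates, since 2 \<bar>y_i\<bar> > R.\<close>
lemma manh_step_toward_origin_le:
  fixes R :: int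
  assumes ly: "length y = n" and lz: "length z = n" and i: "i < n"
    and big: "R < 2 * \<bar>y ! i\<bar>" and yz: "manh y z \<le> R"
    and y0: "manh y (replicate n 0) \<le> R" and z0: "manh z (replicate n 0) \<le> R"
  shows "manh (step_toward_origin y i) z \<le> R"
proof -
  let ?w = "step_toward_origin y i"
  define rest where "rest u v = (\<Sum>j\<in>{..<n} - {i}. \<bar>u ! j - v ! j\<bar>)" for u v :: "int list"
  have "rest y z \<le> (\<Sum>j\<in>{..<n} - {i}. \<bar>y ! j\<bar> + \<bar>z ! j\<bar>)"
    unfolding rest_def by (intro sum_mono) (simp add: abs_triangle_ineq4)
  also have "\<dots> = rest y (replicate n 0) + rest z (replicate n 0)"
    unfolding rest_def sum.distrib[symmetric] by (intro sum.cong) auto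
  finally have triangle: "rest y z \<le> rest y (replicate n 0) + rest z (replicate n 0)" .
  have "rest ?w z = rest y z"
    unfolding rest_def by (intro sum.cong) (auto simp: step_toward_origin_def)
  moreover have "manh u v = \<bar>u ! i - v ! i\<bar> + rest u v" if "length u = n" for u v
    using manh_split_coordinate[OF that i] by (simp add: rest_def)
  moreover have "length ?w = n" "?w ! i = y ! i - sgn (y ! i)"
    using ly i by (simp_all add: step_toward_origin_def)
  ultimately show ?thesis
    using triangle big yz y0 z0 ly lz i
    by (cases "y ! i > 0"; cases "y ! i < 0") (auto simp: sgn_if abs_if split: if_splits)
qed

lemma antilex_less_irrefl: "\<not> antilex_less x x"
  unfolding antilex_less_def by auto

lemma antilex_less_trans:
  assumes "antilex_less x y" "antilex_less y z"
  shows "antilex_less x z"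
proof -
  obtain i where i: "length x = length y" "i < length x" "x ! i < y ! i"
      "\<forall>j. i < j \<and> j < length x \<longrightarrow> x ! j = y ! j"
    using assms(1) unfolding antilex_less_def by blast
  obtain k where k: "length y = length z" "k < length y" "y ! k < z ! k"
      "\<forall>j. k < j \<and> j < length y \<longrightarrow> y ! j = z ! j"
    using assms(2) unfolding antilex_less_def by blast
  have "x ! max i k < z ! max i k"
    using i k by (cases i k rule: linorder_cases) (auto simp: max_def)
  then show ?thesis
    unfolding antilex_less_def using i k by (intro conjI exI[of _ "max i k"]) auto
qed

lemma antilex_less_asym: "antilex_less x y \<Longrightarrow> \<not> antilex_less y x"
  using antilex_less_irrefl antilex_less_trans by blast

lemma antilex_less_linear:
  assumes "length x = length y" "x \<noteq> y"
  shows "antilex_less x y \<or> antilex_less y x"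
proof -
  define D where "D = {j. j < length x \<and> x ! j \<noteq> y ! j}"
  define k where "k = Max D"
  have "finite D" "D \<noteq> {}"
    using assms by (auto simp: D_def list_eq_iff_nth_eq)
  then have "k \<in> D" and "\<And>j. j \<in> D \<Longrightarrow> j \<le> k"
    by (simp_all add: k_def)
  then have "k < length x" "x ! k \<noteq> y ! k" and "\<forall>j. k < j \<and> j < length x \<longrightarrow> x ! j = y ! j"
    by (auto simp: D_def not_le[symmetric])
  then show ?thesis
    unfolding antilex_less_def using assms(1)
    by (cases "x ! k < y ! k") (metis linorder_neqE)+
qed

lemma antilex_least_exists:
  assumes "finite A" "A \<noteq> {}" "\<forall>x\<in>A. length x = n"
  shows "\<exists>d\<in>A. \<forall>x\<in>A. x \<noteq> d \<longrightarrow> antilex_less d x"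
  using assms
proof (induction A rule: finite_ne_induct)
  case (singleton x)
  then show ?case by auto
next
  case (insert a A)
  then obtain d where d: "d \<in> A" "\<forall>x\<in>A. x \<noteq> d \<longrightarrow> antilex_less d x" by auto
  show ?case
  proof (cases "antilex_less a d")
    case True
    then show ?thesis using d antilex_less_trans by (intro bexI[of _ a]) auto
  next
    case False
    then have "antilex_less d a"
      using antilex_less_linear[of d a] d(1) insert by auto
    then show ?thesis using d by (intro bexI[of _ d]) auto
  qed
qed

lemma finite_cube: "finite (cube n m)"
proof (rule finite_subset)
  show "cube n m \<subseteq> {xs. set xs \<subseteq> {0..int m} \<and> length xs = n}"
    by (auto simp: cube_def in_set_conv_nth)
  show "finite {xs. set xs \<subseteq> {0..int m} \<and> length xs = n}"
    by (rule finite_lists_length_eq) simp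
qed

lemma finite_Hset: "finite (Hset n m \<alpha>)"
  using finite_cube by (simp add: Hset_def)

lemma delta_least:
  assumes "Hset n m \<alpha> \<noteq> {}"
  shows "delta n m \<alpha> \<in> Hset n m \<alpha>"
    and "\<And>x. x \<in> Hset n m \<alpha> \<Longrightarrow> x \<noteq> delta n m \<alpha> \<Longrightarrow> antilex_less (delta n m \<alpha>) x"
proof -
  obtain d where d: "d \<in> Hset n m \<alpha>" "\<forall>x\<in>Hset n m \<alpha>. x \<noteq> d \<longrightarrow> antilex_less d x"
    using antilex_least_exists[OF finite_Hset assms, of n] by (auto simp: Hset_def cube_def)
  have "delta n m \<alpha> = d"
    unfolding delta_def
  proof (rule the_equality)
    fix e assume e: "e \<in> Hset n m \<alpha> \<and> (\<forall>x\<in>Hset n m \<alpha>. x \<noteq> e \<longrightarrow> antilex_less e x)"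
    show "e = d"
    proof (rule ccontr)
      assume "e \<noteq> d"
      then have "antilex_less d e" "antilex_less e d" using e d by auto
      then show False using antilex_less_asym by blast
    qed
  qed (use d in blast)
  then show "delta n m \<alpha> \<in> Hset n m \<alpha>"
    and "\<And>x. x \<in> Hset n m \<alpha> \<Longrightarrow> x \<noteq> delta n m \<alpha> \<Longrightarrow> antilex_less (delta n m \<alpha>) x"
    using d by auto
qed

lemma Hset_upward_closed:
  assumes "d \<in> Hset n m \<alpha>" "x \<in> cube n m" "antilex_less d x"
  shows "x \<in> Hset n m \<alpha>"
proof -
  have "cube_rank n m d \<le> cube_rank n m x"
    unfolding cube_rank_def using finite_cube antilex_less_trans[OF _ assms(3)]
    by (intro card_mono) auto
  then show ?thesis using assms by (simp add: Hset_def)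
qed

lemma antilex_less_step_toward:
  assumes "antilex_less d x" "i < length x" "2 \<le> \<bar>x ! i - d ! i\<bar>"
  shows "antilex_less d (x[i := x ! i - sgn (x ! i - d ! i)])"
proof -
  obtain k where k: "length d = length x" "k < length d" "d ! k < x ! k"
      "\<forall>j. k < j \<and> j < length d \<longrightarrow> d ! j = x ! j"
    using assms(1) unfolding antilex_less_def by blast
  have "i \<le> k"
  proof (rule ccontr)
    assume "\<not> i \<le> k"
    then have "d ! i = x ! i" using k assms(2) by auto
    then show False using assms(3) by simp
  qed
  then have "d ! k < x[i := x ! i - sgn (x ! i - d ! i)] ! k"
    using k assms(2,3) by (cases "i = k") auto
  then show ?thesis
    unfolding antilex_less_def using k \<open>i \<le> k\<close> by (intro conjI exI[of _ k]) auto
qed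

lemma length_Yset:
  assumes "y \<in> Yset n m \<alpha>"
  shows "length y = n"
proof -
  obtain x where "x \<in> Hset n m \<alpha>" "y = map2 (-) x (delta n m \<alpha>)"
    using assms by (auto simp: Yset_def)
  moreover from this have "delta n m \<alpha> \<in> Hset n m \<alpha>"
    using delta_least(1) by blast
  ultimately show ?thesis by (simp add: Hset_def cube_def)
qed

lemma step_toward_origin_in_Yset:
  assumes y: "y \<in> Yset n m \<alpha>" and y0: "y \<noteq> replicate n 0" and i: "i < n"
    and big: "2 \<le> \<bar>y ! i\<bar>"
  shows "step_toward_origin y i \<in> Yset n m \<alpha>"
proof -
  define d where "d = delta n m \<alpha>"
  obtain x where xH: "x \<in> Hset n m \<alpha>" and yx: "y = map2 (-) x d"
    using y unfolding Yset_def d_def by blast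
  have dH: "d \<in> Hset n m \<alpha>"
    using delta_least(1) xH unfolding d_def by blast
  have lx: "length x = n" and ld: "length d = n"
    using xH dH by (auto simp: Hset_def cube_def)
  have yi: "y ! i = x ! i - d ! i"
    using yx lx ld i by simp
  have "x \<noteq> d"
    using yx y0 ld by (auto simp: list_eq_iff_nth_eq)
  then have "antilex_less d x"
    using delta_least(2) xH unfolding d_def by blast
  define x' where "x' = x[i := x ! i - sgn (x ! i - d ! i)]"
  have "antilex_less d x'"
    unfolding x'_def using \<open>antilex_less d x\<close> lx i big yi by (intro antilex_less_step_toward) auto
  moreover have "x' \<in> cube n m"
    using xH dH i big yi by (auto simp: x'_def Hset_def cube_def nth_list_update sgn_if)
  ultimately have "x' \<in> Hset n m \<alpha>"
    using dH Hset_upward_closed by blast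
  moreover have "step_toward_origin y i = map2 (-) x' d"
    using yx lx ld i yi by (auto simp: list_eq_iff_nth_eq step_toward_origin_def x'_def nth_list_update)
  ultimately show ?thesis
    unfolding Yset_def d_def by blast
qed

lemma VR_insert:
  assumes "\<tau> \<in> VR X r" "w \<in> X" "\<forall>z\<in>\<tau>. manh w z \<le> r \<and> manh z w \<le> r" "0 \<le> r"
  shows "insert w \<tau> \<in> VR X r"
  using assms unfolding VR_def by (auto simp: manh_self)

lemma VR_subset: "\<sigma> \<in> VR X r \<Longrightarrow> \<tau> \<subseteq> \<sigma> \<Longrightarrow> \<tau> \<noteq> {} \<Longrightarrow> \<tau> \<in> VR X r"
  unfolding VR_def by (auto intro: finite_subset)

lemma Gamma_iff:
  "\<sigma> \<in> Gamma n m \<alpha> r \<longleftrightarrow>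
     \<sigma> \<noteq> {} \<and> replicate n 0 \<notin> \<sigma> \<and> insert (replicate n 0) \<sigma> \<in> VR (Yset n m \<alpha>) r"
  by (auto simp: Gamma_def link_def VR_def)

lemma simplicial_complex_Gamma: "simplicial_complex (Gamma n m \<alpha> r)"
  unfolding simplicial_complex_def
proof (intro conjI ballI allI impI)
  fix \<sigma> assume "\<sigma> \<in> Gamma n m \<alpha> r"
  then show "finite \<sigma>" by (auto simp: Gamma_iff VR_def)
next
  fix \<sigma> \<tau> assume "\<sigma> \<in> Gamma n m \<alpha> r" "\<tau> \<subseteq> \<sigma>" "\<tau> \<noteq> {}"
  then show "\<tau> \<in> Gamma n m \<alpha> r"
    using VR_subset[of "insert (replicate n 0) \<sigma>" _ _ "insert (replicate n 0) \<tau>"]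
    by (auto simp: Gamma_iff)
qed

lemma vertices_Gamma_subset: "vertices (Gamma n m \<alpha> r) \<subseteq> Yset n m \<alpha>"
  by (auto simp: vertices_def Gamma_iff VR_def)

lemma finite_vertices_Gamma: "finite (vertices (Gamma n m \<alpha> r))"
  using finite_subset[OF vertices_Gamma_subset] finite_Hset by (simp add: Yset_def)

lemma Gamma_dominates_step_toward_origin:
  fixes r :: int
  assumes y: "y \<in> vertices (Gamma n m \<alpha> r)" and i: "i < n"
    and big: "r < 2 * \<bar>y ! i\<bar>" and r: "2 \<le> r"
  shows "dominates (Gamma n m \<alpha> r) (step_toward_origin y i) y"
proof -
  let ?Y = "Yset n m \<alpha>" and ?o = "replicate n 0 :: int list" and ?w = "step_toward_origin y i"
  obtain \<sigma>\<^sub>0 where "\<sigma>\<^sub>0 \<in> Gamma n m \<alpha> r" "y \<in> \<sigma>\<^sub>0"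
    using y by (auto simp: vertices_def)
  then have yY: "y \<in> ?Y" and y0: "y \<noteq> ?o" and my0: "manh y ?o \<le> r"
    by (auto simp: Gamma_iff VR_def)
  have ly: "length y = n" using yY length_Yset by blast
  have "2 \<le> \<bar>y ! i\<bar>" using big r by linarith
  then have wY: "?w \<in> ?Y"
    using step_toward_origin_in_Yset[OF yY y0 i] by blast
  have "?w ! i \<noteq> 0"
    using \<open>2 \<le> \<bar>y ! i\<bar>\<close> ly i by (auto simp: step_toward_origin_def sgn_if)
  then have w0: "?w \<noteq> ?o"
    using i by auto
  have lw: "length ?w = n" using ly by (simp add: step_toward_origin_def)
  have close: "manh ?w z \<le> r \<and> manh z ?w \<le> r"
    if "z \<in> ?Y \<union> {?o}" "manh y z \<le> r" "manh z ?o \<le> r" for z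
  proof -
    have lz: "length z = n" using that(1) length_Yset by auto
    have "manh ?w z \<le> r"
      using manh_step_toward_origin_le[OF ly lz i big that(2) my0 that(3)] .
    then show ?thesis using manh_commute lw lz by metis
  qed
  have "insert ?w \<sigma> \<in> Gamma n m \<alpha> r" if "\<sigma> \<in> Gamma n m \<alpha> r" "y \<in> \<sigma>" for \<sigma>
  proof -
    have T: "insert ?o \<sigma> \<in> VR ?Y r" "?o \<notin> \<sigma>"
      using that(1) by (auto simp: Gamma_iff)
    have "\<forall>z\<in>insert ?o \<sigma>. manh ?w z \<le> r \<and> manh z ?w \<le> r"
      using T that(2) close unfolding VR_def by blast
    then have "insert ?w (insert ?o \<sigma>) \<in> VR ?Y r"
      using VR_insert[OF T(1) wY] r by simp
    then show ?thesis
      using T(2) w0 by (simp add: Gamma_iff insert_commute)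
  qed
  moreover have "?w \<noteq> y"
    using \<open>2 \<le> \<bar>y ! i\<bar>\<close> ly i by (auto simp: step_toward_origin_def sgn_if list_eq_iff_nth_eq)
  ultimately show ?thesis by (simp add: dominates_def)
qed

lemma Gamma_far_vertex_dominated:
  fixes r :: int
  assumes y: "y \<in> vertices (Gamma n m \<alpha> r)" and i: "i < n"
    and big: "r < 2 * \<bar>y ! i\<bar>" and r: "2 \<le> r"
  shows "\<exists>w\<in>vertices (Gamma n m \<alpha> r).
    manh w (replicate n 0) < manh y (replicate n 0) \<and> dominates (Gamma n m \<alpha> r) w y"
proof (intro bexI conjI)
  show dom: "dominates (Gamma n m \<alpha> r) (step_toward_origin y i) y"
    using Gamma_dominates_step_toward_origin[OF y i big r] .
  show "step_toward_origin y i \<in> vertices (Gamma n m \<alpha> r)"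
    using y dom by (auto simp: dominates_def vertices_def)
  have "length y = n"
    using y vertices_Gamma_subset length_Yset by blast
  moreover have "y ! i \<noteq> 0"
    using big r by auto
  ultimately show "manh (step_toward_origin y i) (replicate n 0) < manh y (replicate n 0)"
    using manh_step_toward_origin_origin i by simp
qed

theorem lemma3p3:
  fixes n m r \<alpha> :: nat
  assumes "n \<ge> 2" and "m \<ge> 1" and "r \<ge> 2"
    and "1 \<le> \<alpha>" and "\<alpha> < (m + 1) ^ n"
  shows "realization (Gamma n m \<alpha> (int r)) homotopy_equivalent_space
         realization (induced (Gamma n m \<alpha> (int r))
            {x \<in> vertices (Gamma n m \<alpha> (int r)). \<forall>i<n. \<bar>x ! i\<bar> \<le> int (r div 2)})"
proof -
  let ?K = "Gamma n m \<alpha> (int r)"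
  have "\<exists>w\<in>vertices ?K. manh w (replicate n 0) < manh y (replicate n 0) \<and> dominates ?K w y"
    if "y \<in> vertices ?K" "i < n" "\<not> \<bar>y ! i\<bar> \<le> int (r div 2)" for y i
    using Gamma_far_vertex_dominated[OF that(1,2)] that(3) assms(3) by linarith
  then have "realization (induced ?K (vertices ?K)) homotopy_equivalent_space
      realization (induced ?K {x \<in> vertices ?K. \<forall>i<n. \<bar>x ! i\<bar> \<le> int (r div 2)})"
    by (intro realization_induced_collapse[where \<phi> = "\<lambda>y. manh y (replicate n 0)"]
        simplicial_complex_Gamma finite_vertices_Gamma) blast+
  then show ?thesis by (simp add: induced_vertices)
qed

end
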